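(* Let $(T_i)_{i\ge 0}$ be a sequence of pairwise distinct trees in $\mathcal{T}_3$. Then the average subtree density $D(T_i)$ tends to $\frac{1}{2}$ as $i\to\infty$ if and only if the proportion of vertices of $T_i$ that are leaves tends to $1$.
   Context: All trees are finite. A leaf is a vertex of degree at most 1; an internal vertex is a vertex of degree at least 2. $\mathcal{T}_3$ is the set of trees that have at least one internal vertex and in which every internal vertex has degree at least 3 (series-reduced trees). A subtree of a tree $T$ is a nonempty set of vertices of $T$ inducing a connected subgraph (equivalently a subtree). $\mu(T)$ is the average number of vertices of a subtree of $T$, taken uniformly over all subtrees, and the average subtree density is $D(T)=\mu(T)/n(T)$, where $n(T)$ is the number of vertices of $T$. *)

theory Defs
  imports Complex_Main
begin

text \<open>A (finite, simple, undirected) graph is a vertex set together with a symmetric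
  edge relation; vertices are natural numbers (every finite tree has an isomorphic
  copy on nat).\<close>
type_synonym graph = "nat set \<times> (nat \<times> nat) set"

definition verts :: "graph \<Rightarrow> nat set" where "verts G = fst G"
definition edges :: "graph \<Rightarrow> (nat \<times> nat) set" where "edges G = snd G"

definition is_graph :: "graph \<Rightarrow> bool" where
  "is_graph G \<longleftrightarrow> finite (verts G) \<and> edges G \<subseteq> verts G \<times> verts G \<and>
     sym (edges G) \<and> (\<forall>x. (x, x) \<notin> edges G)"

definition induces_connected :: "graph \<Rightarrow> nat set \<Rightarrow> bool" where
  "induces_connected G S \<longleftrightarrow>
     (\<forall>x\<in>S. \<forall>y\<in>S. (x, y) \<in> (edges G \<inter> (S \<times> S))\<^sup>*)"

definition num_edges :: "graph \<Rightarrow> nat" where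
  "num_edges G = card {e. \<exists>x y. e = {x, y} \<and> (x, y) \<in> edges G}"

definition is_tree :: "graph \<Rightarrow> bool" where
  "is_tree G \<longleftrightarrow> is_graph G \<and> verts G \<noteq> {} \<and> induces_connected G (verts G) \<and>
     num_edges G = card (verts G) - 1"

definition degree :: "graph \<Rightarrow> nat \<Rightarrow> nat" where
  "degree G v = card {u. (v, u) \<in> edges G}"

definition leaves :: "graph \<Rightarrow> nat set" where
  "leaves G = {v \<in> verts G. degree G v \<le> 1}"

definition internal_verts :: "graph \<Rightarrow> nat set" where
  "internal_verts G = {v \<in> verts G. degree G v \<ge> 2}"

definition T3 :: "graph \<Rightarrow> bool" where
  "T3 G \<longleftrightarrow> is_tree G \<and> internal_verts G \<noteq> {} \<and> (\<forall>v\<in>internal_verts G. degree G v \<ge> 3)"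

definition subtrees :: "graph \<Rightarrow> nat set set" where
  "subtrees G = {S. S \<subseteq> verts G \<and> S \<noteq> {} \<and> induces_connected G S}"

definition mean_subtree_order :: "graph \<Rightarrow> real" where
  "mean_subtree_order G = (\<Sum>S\<in>subtrees G. real (card S)) / real (card (subtrees G))"

definition avg_subtree_density :: "graph \<Rightarrow> real" where
  "avg_subtree_density G = mean_subtree_order G / real (card (verts G))"

definition graph_iso :: "graph \<Rightarrow> graph \<Rightarrow> bool" where
  "graph_iso G H \<longleftrightarrow> (\<exists>f. bij_betw f (verts G) (verts H) \<and>
     (\<forall>x\<in>verts G. \<forall>y\<in>verts G. (x, y) \<in> edges G \<longleftrightarrow> (f x, f y) \<in> edges H))"

end

theory Submission
  imports Defs
begin

text \<open>Let a series-reduced tree have \<open>n\<close> vertices, \<open>k\<close> of them internal and \<open>L = n - k\<close> leaves;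
  degree counting gives \<open>L \<ge> k + 2\<close>, and every set of leaves together with all internal vertices
  is a subtree, so there are \<open>N \<ge> 2\<^sup>L\<close> subtrees.

  Upper bound: a leaf lies in at most \<open>(N + 1)/2\<close> subtrees (removing it is injective on the
  others), so \<open>D \<le> 1/2 + k/(2n) + 1/n\<close>.

  Lower bound: give each internal vertex \<open>u\<close> the weight \<open>2 + \<ell>(u)\<close>, \<open>\<ell>(u)\<close> its number of
  pendant leaves, so the total weight is \<open>2k + L\<close>. A leaf lies in at least half of the subtrees
  containing its neighbour, so the weight of a subtree, summed over all subtrees, is at most twice
  the total size, and it remains to bound the weight a subtree \<open>S\<close> misses. If \<open>S\<close> meets the
  internal vertices, that weight lies in the branches beyond the arcs \<open>(a, b)\<close> leaving \<open>S\<close>, and only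
  a fraction \<open>1/(1 + 2\<^sup>\<lambda>)\<close> of all subtrees leave through \<open>(a, b)\<close>, \<open>\<lambda>\<close> the number of leaves on
  that branch, since such a subtree extends by the branch and any set of its leaves. Weighted by the
  branch weight this fraction is at most \<open>4/5\<close>, as a branch has more leaves than internal vertices,
  and it is exponentially small on the side of an edge carrying at least \<open>L/2 \<ge> n/4\<close> leaves.
  Summing over the \<open>k - 1\<close> internal edges gives \<open>D \<ge> 1/2 + k/(10n) - 2n/2\<^bsup>n/4\<^esup>\<close>.

  Finally, pairwise non-isomorphic graphs have only finitely many members of each order, so
  \<open>n \<rightarrow> \<infinity>\<close> and both bounds squeeze \<open>D \<rightarrow> 1/2\<close> against \<open>k/n \<rightarrow> 0\<close>.\<close>

lemma mem_subtrees_iff: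
  "S \<in> subtrees G \<longleftrightarrow> S \<subseteq> verts G \<and> S \<noteq> {} \<and> induces_connected G S"
  unfolding subtrees_def by simp

lemma sum_mult_card_swap:
  assumes "finite A" "finite B"
  shows "(\<Sum>a\<in>A. c a * card {b \<in> B. P a b}) = (\<Sum>b\<in>B. \<Sum>a\<in>{a \<in> A. P a b}. c a)"
proof -
  have "(\<Sum>a\<in>A. c a * card {b \<in> B. P a b}) = (\<Sum>a\<in>A. \<Sum>b\<in>B. if P a b then c a else 0)"
    using assms(2) by (simp add: sum.inter_filter[symmetric] mult.commute)
  also have "\<dots> = (\<Sum>b\<in>B. \<Sum>a\<in>A. if P a b then c a else 0)" by (rule sum.swap)
  also have "\<dots> = (\<Sum>b\<in>B. \<Sum>a\<in>{a \<in> A. P a b}. c a)" using assms(1) by (simp add: sum.inter_filter)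
  finally show ?thesis .
qed

lemma rtrancl_Int_Times_mono:
  assumes "(x, y) \<in> (R \<inter> A \<times> A)\<^sup>*" "A \<subseteq> B"
  shows "(x, y) \<in> (R \<inter> B \<times> B)\<^sup>*"
  using assms rtrancl_mono[of "R \<inter> A \<times> A" "R \<inter> B \<times> B"] by blast

lemma rtrancl_Int_Times_sym:
  assumes "sym R" "(x, y) \<in> (R \<inter> A \<times> A)\<^sup>*"
  shows "(y, x) \<in> (R \<inter> A \<times> A)\<^sup>*"
proof -
  have "sym (R \<inter> A \<times> A)" using assms(1) by (auto simp: sym_def)
  then show ?thesis using assms(2) by (metis rtrancl_converseI sym_conv_converse_eq)
qed

lemma induces_connected_Diff_low_degree:
  assumes fin: "\<And>z. z \<in> Z \<Longrightarrow> finite {u. (z, u) \<in> edges G}"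
    and deg: "\<And>z. z \<in> Z \<Longrightarrow> degree G z \<le> 1"
    and sym: "sym (edges G)"
    and conn: "induces_connected G S"
  shows "induces_connected G (S - Z)"
  unfolding induces_connected_def
proof (intro ballI)
  fix x y assume x: "x \<in> S - Z" and y: "y \<in> S - Z"
  let ?E = "edges G \<inter> S \<times> S" and ?F = "edges G \<inter> (S - Z) \<times> (S - Z)"
  have "(x, y) \<in> ?E\<^sup>*" using conn x y unfolding induces_connected_def by auto
  \<comment> \<open>a path may enter \<open>Z\<close> only at its last vertex, since it cannot leave through a second edge\<close>
  then have "(y \<notin> Z \<longrightarrow> (x, y) \<in> ?F\<^sup>*) \<and>
      (y \<in> Z \<longrightarrow> (\<exists>z. (x, z) \<in> ?F\<^sup>* \<and> z \<in> S - Z \<and> (y, z) \<in> edges G))"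
  proof (induction rule: rtrancl_induct)
    case base
    then show ?case using x by auto
  next
    case (step y w)
    show ?case
    proof (cases "y \<in> Z")
      case False
      with step have p: "(x, y) \<in> ?F\<^sup>*" by auto
      show ?thesis
      proof (cases "w \<in> Z")
        case False
        then have "(y, w) \<in> ?F" using step(2) \<open>y \<notin> Z\<close> by auto
        then show ?thesis using p False by (meson rtrancl_into_rtrancl)
      next
        case True
        have "(w, y) \<in> edges G" using step(2) sym by (auto dest: symD)
        then show ?thesis using p True \<open>y \<notin> Z\<close> step(2) by auto
      qed
    next
      case True
      with step obtain z where z: "(x, z) \<in> ?F\<^sup>*" "z \<in> S - Z" "(y, z) \<in> edges G" by auto
      have "w = z"
        using deg[OF True] card_le_Suc0_iff_eq[OF fin[OF True]] step(2) z(3)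
        unfolding degree_def by auto
      then show ?thesis using z by auto
    qed
  qed
  then show "(x, y) \<in> ?F\<^sup>*" using y by auto
qed

lemma induces_connected_Un_edge:
  assumes A: "induces_connected G A" and B: "induces_connected G B"
    and ab: "a \<in> A" "b \<in> B" "(a, b) \<in> edges G" and sym: "sym (edges G)"
  shows "induces_connected G (A \<union> B)"
  unfolding induces_connected_def
proof (intro ballI)
  fix x y assume x: "x \<in> A \<union> B" and y: "y \<in> A \<union> B"
  let ?U = "edges G \<inter> (A \<union> B) \<times> (A \<union> B)"
  have inA: "(u, v) \<in> ?U\<^sup>*" if "u \<in> A" "v \<in> A" for u v
    using A that unfolding induces_connected_def by (blast intro: rtrancl_Int_Times_mono)
  have inB: "(u, v) \<in> ?U\<^sup>*" if "u \<in> B" "v \<in> B" for u v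
    using B that unfolding induces_connected_def by (blast intro: rtrancl_Int_Times_mono)
  have ab': "(a, b) \<in> ?U\<^sup>*" "(b, a) \<in> ?U\<^sup>*" using ab sym by (auto dest: symD)
  show "(x, y) \<in> ?U\<^sup>*"
  proof (cases "x \<in> A"; cases "y \<in> A")
    assume "x \<in> A" "y \<notin> A"
    then show ?thesis using y inA[of x a] inB[of b y] ab ab'(1) by (blast intro: rtrancl_trans)
  next
    assume "x \<notin> A" "y \<in> A"
    then show ?thesis using x inB[of x b] inA[of a y] ab ab'(2) by (blast intro: rtrancl_trans)
  next
    assume "x \<notin> A" "y \<notin> A"
    then show ?thesis using x y inB by blast
  qed (use inA in blast)
qed

lemma induces_connected_Un_pendants:
  assumes A: "induces_connected G A"
    and Q: "\<And>q. q \<in> Q \<Longrightarrow> \<exists>a\<in>A. (a, q) \<in> edges G" and sym: "sym (edges G)"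
  shows "induces_connected G (A \<union> Q)"
  unfolding induces_connected_def
proof (intro ballI)
  fix x y assume x: "x \<in> A \<union> Q" and y: "y \<in> A \<union> Q"
  let ?U = "edges G \<inter> (A \<union> Q) \<times> (A \<union> Q)"
  have inA: "(u, v) \<in> ?U\<^sup>*" if "u \<in> A" "v \<in> A" for u v
    using A that unfolding induces_connected_def by (blast intro: rtrancl_Int_Times_mono)
  have toA: "\<exists>a\<in>A. (u, a) \<in> ?U\<^sup>* \<and> (a, u) \<in> ?U\<^sup>*" if u: "u \<in> A \<union> Q" for u
  proof (cases "u \<in> A")
    case False
    then obtain a where "a \<in> A" "(a, u) \<in> edges G" using Q u by blast
    then show ?thesis using sym u by (intro bexI[of _ a]) (auto dest: symD)
  qed blast
  show "(x, y) \<in> ?U\<^sup>*" using toA[OF x] toA[OF y] inA by (meson rtrancl_trans)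
qed

text \<open>Choosing for every vertex outside \<open>R\<close> a neighbour closer to \<open>R\<close> yields \<open>2 |V - R|\<close> distinct
  arcs, since a chosen arc and its reverse cannot both be chosen.\<close>

lemma two_card_Diff_le_card_arcs_Diff:
  fixes E :: "('a \<times> 'a) set"
  assumes finV: "finite V" and EV: "E \<subseteq> V \<times> V" and sym: "sym E"
    and reach: "\<And>v. v \<in> V \<Longrightarrow> \<exists>r\<in>R. (r, v) \<in> E\<^sup>*"
  shows "2 * card (V - R) \<le> card (E - R \<times> R)"
proof -
  define d where "d v = (LEAST m. \<exists>r\<in>R. (r, v) \<in> E ^^ m)" for v
  have dist: "\<exists>r\<in>R. (r, v) \<in> E ^^ d v" if v: "v \<in> V" for v
  proof -
    obtain r where "r \<in> R" "(r, v) \<in> E\<^sup>*" using reach[OF v] by blast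
    then have "\<exists>m. \<exists>r\<in>R. (r, v) \<in> E ^^ m" using rtrancl_power by blast
    then show ?thesis unfolding d_def by (rule LeastI_ex)
  qed
  have "\<forall>v\<in>V - R. \<exists>w. (w, v) \<in> E \<and> d w < d v"
  proof
    fix v assume v: "v \<in> V - R"
    obtain r where r: "r \<in> R" "(r, v) \<in> E ^^ d v" using dist v by blast
    have "d v \<noteq> 0" using r v by (metis DiffD2 relpow_0_E)
    then obtain m where m: "d v = Suc m" using not0_implies_Suc by blast
    then obtain w where w: "(r, w) \<in> E ^^ m" "(w, v) \<in> E" using r(2) by auto
    have "d w \<le> m" unfolding d_def using w(1) r(1) by (intro Least_le) blast
    then show "\<exists>w. (w, v) \<in> E \<and> d w < d v" using w m by auto
  qed
  then obtain p where p: "\<And>v. v \<in> V - R \<Longrightarrow> (p v, v) \<in> E \<and> d (p v) < d v"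
    by (auto dest!: bchoice)
  define A1 where "A1 = (\<lambda>v. (v, p v)) ` (V - R)"
  define A2 where "A2 = (\<lambda>v. (p v, v)) ` (V - R)"
  have card1: "card A1 = card (V - R)" unfolding A1_def by (rule card_image) (auto simp: inj_on_def)
  have card2: "card A2 = card (V - R)" unfolding A2_def by (rule card_image) (auto simp: inj_on_def)
  have "A1 \<inter> A2 = {}"
  proof -
    have False if "v \<in> V - R" "w \<in> V - R" "(v, p v) = (p w, w)" for v w
      using p[OF that(1)] p[OF that(2)] that(3) by auto
    then show ?thesis unfolding A1_def A2_def by blast
  qed
  have sub: "A1 \<union> A2 \<subseteq> E - R \<times> R"
    using p sym unfolding A1_def A2_def by (auto dest: symD)
  have fin: "finite (E - R \<times> R)" using finV EV by (meson finite_Diff finite_SigmaI finite_subset)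
  have "card A1 + card A2 = card (A1 \<union> A2)"
    using \<open>A1 \<inter> A2 = {}\<close> sub fin by (intro card_Un_disjoint[symmetric]) (auto intro: finite_subset)
  also have "\<dots> \<le> card (E - R \<times> R)" by (rule card_mono[OF fin sub])
  finally show ?thesis using card1 card2 by simp
qed

locale tree =
  fixes G :: graph
  assumes is_tree: "is_tree G"
begin

abbreviation "V \<equiv> verts G"
abbreviation "E \<equiv> edges G"
abbreviation "N \<equiv> card (subtrees G)"

definition "nbrs v = {u. (v, u) \<in> E}"

lemma is_graph: "is_graph G" using is_tree unfolding is_tree_def by auto
lemma finite_V: "finite V" using is_graph unfolding is_graph_def by auto
lemma E_subset: "E \<subseteq> V \<times> V" using is_graph unfolding is_graph_def by auto
lemma sym_E: "sym E" using is_graph unfolding is_graph_def by auto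
lemma irrefl_E: "(x, x) \<notin> E" using is_graph unfolding is_graph_def by auto
lemma finite_E: "finite E" using finite_V E_subset by (meson finite_SigmaI finite_subset)
lemma E_commute: "(x, y) \<in> E \<Longrightarrow> (y, x) \<in> E" using sym_E by (auto dest: symD)
lemma E_verts: "(x, y) \<in> E \<Longrightarrow> x \<in> V \<and> y \<in> V" using E_subset by auto

lemma rtrancl_E: "x \<in> V \<Longrightarrow> y \<in> V \<Longrightarrow> (x, y) \<in> E\<^sup>*"
  using is_tree unfolding is_tree_def induces_connected_def
  by (meson Int_lower1 rtrancl_mono subsetD)

lemma nbrs_subset: "nbrs v \<subseteq> V" using E_subset unfolding nbrs_def by auto
lemma finite_nbrs: "finite (nbrs v)" using nbrs_subset finite_V by (rule finite_subset)
lemma degree_eq_card_nbrs: "degree G v = card (nbrs v)" unfolding degree_def nbrs_def by simp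

lemma card_E: "card E = 2 * (card V - 1)"
proof -
  define h where "h p = {fst p, snd p}" for p :: "nat \<times> nat"
  have "{e. \<exists>x y. e = {x, y} \<and> (x, y) \<in> E} = h ` E"
  proof (intro set_eqI iffI)
    fix e assume "e \<in> {e. \<exists>x y. e = {x, y} \<and> (x, y) \<in> E}"
    then obtain x y where "e = {x, y}" "(x, y) \<in> E" by blast
    then show "e \<in> h ` E" unfolding h_def by (intro image_eqI[of _ _ "(x, y)"]) auto
  qed (force simp: h_def)
  then have num: "num_edges G = card (h ` E)" unfolding num_edges_def by simp
  have fibre: "card {p \<in> E. h p = e} = 2" if e: "e \<in> h ` E" for e
  proof -
    obtain x y where xy: "(x, y) \<in> E" "e = {x, y}" using e unfolding h_def by force
    have "{p \<in> E. h p = e} = {(x, y), (y, x)}"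
    proof (intro set_eqI iffI)
      fix p assume "p \<in> {p \<in> E. h p = e}"
      then show "p \<in> {(x, y), (y, x)}"
        using xy unfolding h_def by (cases p) (auto simp: doubleton_eq_iff)
    qed (use xy E_commute in \<open>auto simp: h_def\<close>)
    then show ?thesis using xy irrefl_E by (cases "x = y") auto
  qed
  have "card E = (\<Sum>e\<in>h ` E. card {p \<in> E. h p = e})"
    using sum.image_gen[OF finite_E, of "\<lambda>_. 1::nat" h] by simp
  also have "\<dots> = 2 * num_edges G" using fibre num by simp
  finally show ?thesis using is_tree unfolding is_tree_def by simp
qed

lemma card_E_Int_Times: "finite A \<Longrightarrow> card (E \<inter> A \<times> B) = (\<Sum>u\<in>A. card (nbrs u \<inter> B))"
proof -
  assume "finite A"
  have "E \<inter> A \<times> B = Sigma A (\<lambda>u. nbrs u \<inter> B)" unfolding nbrs_def by auto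
  then show ?thesis using \<open>finite A\<close> by (simp add: card_SigmaI finite_nbrs)
qed

text \<open>A connected vertex set of a tree induces a tree: at least \<open>2(|R| - 1)\<close> arcs lie inside \<open>R\<close> and
  at least \<open>2 |V - R|\<close> arcs outside, and the total is \<open>2(|V| - 1)\<close>.\<close>

lemma card_E_Int_connected:
  assumes RV: "R \<subseteq> V" and "R \<noteq> {}" and conn: "induces_connected G R"
  shows "card (E \<inter> R \<times> R) = 2 * (card R - 1)"
proof -
  have finR: "finite R" using RV finite_V by (rule finite_subset)
  obtain x where x: "x \<in> R" using \<open>R \<noteq> {}\<close> by auto
  have "2 * card (R - {x}) \<le> card ((E \<inter> R \<times> R) - {x} \<times> {x})"
  proof (rule two_card_Diff_le_card_arcs_Diff[OF finR, of "E \<inter> R \<times> R" "{x}"])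
    show "sym (E \<inter> R \<times> R)" using sym_E by (auto simp: sym_def)
    show "\<exists>r\<in>{x}. (r, v) \<in> (E \<inter> R \<times> R)\<^sup>*" if "v \<in> R" for v
      using x that conn unfolding induces_connected_def by blast
  qed auto
  moreover have "(E \<inter> R \<times> R) - {x} \<times> {x} = E \<inter> R \<times> R" using irrefl_E by auto
  ultimately have lo: "2 * (card R - 1) \<le> card (E \<inter> R \<times> R)" using x finR by simp
  have hi: "2 * card (V - R) \<le> card (E - R \<times> R)"
    by (rule two_card_Diff_le_card_arcs_Diff[OF finite_V E_subset sym_E])
       (use x RV rtrancl_E in blast)
  have "card E = card (E \<inter> R \<times> R) + card (E - R \<times> R)"
  proof -
    have "card E = card ((E \<inter> R \<times> R) \<union> (E - R \<times> R))" by (simp add: Int_Diff_Un)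
    also have "\<dots> = card (E \<inter> R \<times> R) + card (E - R \<times> R)"
      by (rule card_Un_disjoint) (use finite_E in auto)
    finally show ?thesis .
  qed
  moreover have "card (V - R) = card V - card R" using card_Diff_subset[OF finR RV] .
  moreover have "card R \<le> card V" using card_mono[OF finite_V RV] .
  moreover have "card R \<ge> 1" using finR \<open>R \<noteq> {}\<close> by (simp add: Suc_leI card_gt_0_iff)
  ultimately show ?thesis using hi lo card_E by linarith
qed

definition "n_containing v = card {S \<in> subtrees G. v \<in> S}"
definition "n_avoiding v = card {S \<in> subtrees G. v \<notin> S}"

lemma finite_subtrees: "finite (subtrees G)"
proof -
  have "subtrees G \<subseteq> Pow V" by (auto simp: mem_subtrees_iff)
  then show ?thesis using finite_V by (meson finite_Pow_iff finite_subset)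
qed

lemma n_containing_add_n_avoiding: "n_containing v + n_avoiding v = N"
proof -
  have "n_containing v + n_avoiding v = card ({S \<in> subtrees G. v \<in> S} \<union> {S \<in> subtrees G. v \<notin> S})"
    unfolding n_containing_def n_avoiding_def
    by (rule card_Un_disjoint[symmetric]) (use finite_subtrees in auto)
  also have "{S \<in> subtrees G. v \<in> S} \<union> {S \<in> subtrees G. v \<notin> S} = subtrees G" by auto
  finally show ?thesis .
qed

lemma sum_card_subtrees: "(\<Sum>S\<in>subtrees G. card S) = (\<Sum>v\<in>V. n_containing v)"
proof -
  have "(\<Sum>v\<in>V. n_containing v) = (\<Sum>S\<in>subtrees G. card {v \<in> V. v \<in> S})"
    using sum_mult_card_swap[OF finite_V finite_subtrees, of "\<lambda>_. 1" "\<lambda>v S. v \<in> S"]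
    unfolding n_containing_def by simp
  also have "\<dots> = (\<Sum>S\<in>subtrees G. card S)"
    by (intro sum.cong refl arg_cong[of _ _ card]) (auto simp: mem_subtrees_iff)
  finally show ?thesis by simp
qed

lemma subtree_has_nbr:
  assumes "S \<in> subtrees G" "x \<in> S" "y \<in> S" "x \<noteq> y"
  shows "\<exists>z\<in>S. (x, z) \<in> E"
proof -
  have "(x, y) \<in> (E \<inter> S \<times> S)\<^sup>*" using assms unfolding mem_subtrees_iff induces_connected_def by auto
  then obtain z where "(x, z) \<in> E \<inter> S \<times> S" using assms(4) by (metis converse_rtranclE)
  then show ?thesis by auto
qed

end

locale series_reduced_tree = tree +
  assumes internal_nonempty: "internal_verts G \<noteq> {}"
    and three_le_degree: "v \<in> internal_verts G \<Longrightarrow> 3 \<le> degree G v"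

lemma series_reduced_tree_if_T3: "T3 G \<Longrightarrow> series_reduced_tree G"
  unfolding T3_def series_reduced_tree_def series_reduced_tree_axioms_def tree_def by auto

context series_reduced_tree
begin

abbreviation "I \<equiv> internal_verts G"
abbreviation "Lf \<equiv> leaves G"

lemma V_eq_internal_Un_leaves: "V = I \<union> Lf"
  unfolding internal_verts_def leaves_def by auto
lemma internal_Int_leaves: "I \<inter> Lf = {}"
  unfolding internal_verts_def leaves_def by auto
lemma internal_subset: "I \<subseteq> V" and leaves_subset: "Lf \<subseteq> V"
  using V_eq_internal_Un_leaves by auto
lemma finite_internal: "finite I" and finite_leaves: "finite Lf"
  using finite_V internal_subset leaves_subset by (auto intro: finite_subset)
lemma card_V_eq: "card V = card I + card Lf"
  using V_eq_internal_Un_leaves internal_Int_leaves finite_internal finite_leaves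
  by (simp add: card_Un_disjoint)
lemma three_le_card_nbrs: "u \<in> I \<Longrightarrow> 3 \<le> card (nbrs u)"
  using three_le_degree by (simp add: degree_eq_card_nbrs)
lemma card_nbrs_leaf: "v \<in> Lf \<Longrightarrow> card (nbrs v) \<le> 1"
  unfolding leaves_def by (simp add: degree_eq_card_nbrs)
lemma one_le_card_internal: "1 \<le> card I"
  using internal_nonempty finite_internal by (simp add: Suc_leI card_gt_0_iff)

lemma four_le_card_V: "4 \<le> card V"
proof -
  obtain u where u: "u \<in> I" using internal_nonempty by auto
  have "u \<notin> nbrs u" using irrefl_E unfolding nbrs_def by auto
  then have "card (insert u (nbrs u)) = Suc (card (nbrs u))" using finite_nbrs by simp
  moreover have "insert u (nbrs u) \<subseteq> V" using u internal_subset nbrs_subset by auto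
  ultimately have "Suc (card (nbrs u)) \<le> card V" using card_mono[OF finite_V] by metis
  then show ?thesis using three_le_card_nbrs[OF u] by linarith
qed

lemma induces_connected_internal: "induces_connected G I"
proof -
  have "induces_connected G (V - Lf)"
    by (rule induces_connected_Diff_low_degree)
       (use finite_nbrs is_tree sym_E in \<open>auto simp: nbrs_def leaves_def is_tree_def\<close>)
  moreover have "V - Lf = I" using V_eq_internal_Un_leaves internal_Int_leaves by auto
  ultimately show ?thesis by simp
qed

lemma leaf_nbrs_eq:
  assumes "v \<in> Lf" "(v, u) \<in> E" "(v, w) \<in> E"
  shows "u = w"
proof -
  have "u \<in> nbrs v" "w \<in> nbrs v" using assms unfolding nbrs_def by auto
  then show ?thesis using card_nbrs_leaf[OF assms(1)] card_le_Suc0_iff_eq[OF finite_nbrs] by auto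
qed

lemma ex_nbr:
  assumes "v \<in> V"
  shows "\<exists>u. (v, u) \<in> E"
proof -
  have "\<not> V \<subseteq> {v}"
  proof
    assume "V \<subseteq> {v}"
    then have "card V \<le> 1" using card_mono[of "{v}" V] by simp
    then show False using four_le_card_V by simp
  qed
  then obtain w where w: "w \<in> V" "w \<noteq> v" by auto
  have "(v, w) \<in> E\<^sup>*" using rtrancl_E assms w by auto
  then show ?thesis using w(2) by (metis converse_rtranclE)
qed

text \<open>The unique neighbour of a leaf; \<open>THE\<close> gives junk on the other vertices.\<close>

definition "leaf_nbr v = (THE u. (v, u) \<in> E)"

lemma leaf_nbr:
  assumes "v \<in> Lf"
  shows "(v, leaf_nbr v) \<in> E"
proof -
  obtain u where u: "(v, u) \<in> E" using ex_nbr assms leaves_subset by blast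
  show ?thesis unfolding leaf_nbr_def by (rule theI[of _ u]) (use u leaf_nbrs_eq[OF assms] in auto)
qed

lemma leaf_nbr_eq: "v \<in> Lf \<Longrightarrow> (v, u) \<in> E \<Longrightarrow> u = leaf_nbr v"
  using leaf_nbr leaf_nbrs_eq by blast

text \<open>Two adjacent leaves would form a component of their own, but a tree with an internal vertex
  has at least four vertices.\<close>

lemma leaf_nbr_internal:
  assumes v: "v \<in> Lf"
  shows "leaf_nbr v \<in> I"
proof (rule ccontr)
  assume "leaf_nbr v \<notin> I"
  define w where "w = leaf_nbr v"
  have vw: "(v, w) \<in> E" using leaf_nbr[OF v] w_def by simp
  then have wL: "w \<in> Lf" using \<open>leaf_nbr v \<notin> I\<close> V_eq_internal_Un_leaves E_verts w_def by auto
  have wv: "(w, v) \<in> E" using vw E_commute by auto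
  have "y \<in> {v, w}" if "(v, y) \<in> E\<^sup>*" for y
    using that
  proof (induction rule: rtrancl_induct)
    case (step y z)
    then have "y = v \<or> y = w" by simp
    then show ?case
      by (metis insertI1 insertI2 leaf_nbrs_eq[OF v vw] leaf_nbrs_eq[OF wL wv] step.hyps(2))
  qed simp
  then have "V \<subseteq> {v, w}" using rtrancl_E v leaves_subset by auto
  then have "card V \<le> card {v, w}" by (intro card_mono) auto
  also have "\<dots> \<le> 2" by (cases "v = w") auto
  finally
  show False using four_le_card_V by simp
qed

lemma nbrs_Int_leaves: "nbrs u \<inter> Lf = {v \<in> Lf. leaf_nbr v = u}"
proof -
  have "v \<in> nbrs u \<longleftrightarrow> leaf_nbr v = u" if v: "v \<in> Lf" for v
  proof
    show "v \<in> nbrs u \<Longrightarrow> leaf_nbr v = u" using leaf_nbr_eq[OF v] E_commute unfolding nbrs_def by auto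
    show "leaf_nbr v = u \<Longrightarrow> v \<in> nbrs u" using leaf_nbr[OF v] E_commute unfolding nbrs_def by auto
  qed
  then show ?thesis by auto
qed

definition "n_pendants u = card {v \<in> Lf. leaf_nbr v = u}"

lemma card_nbrs_Int_leaves: "card (nbrs u \<inter> Lf) = n_pendants u"
  unfolding n_pendants_def nbrs_Int_leaves by simp

lemma sum_n_pendants_mult:
  "finite A \<Longrightarrow> (\<Sum>u\<in>A. n_pendants u * c u) = (\<Sum>v\<in>{v\<in>Lf. leaf_nbr v \<in> A}. c (leaf_nbr v))"
proof -
  assume A: "finite A"
  have "(\<Sum>v\<in>{v\<in>Lf. leaf_nbr v \<in> A}. c (leaf_nbr v))
      = (\<Sum>u\<in>A. \<Sum>v\<in>{x \<in> {v\<in>Lf. leaf_nbr v \<in> A}. leaf_nbr x = u}. c (leaf_nbr v))"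
    by (rule sum.group[symmetric]) (use A finite_leaves in auto)
  also have "\<dots> = (\<Sum>u\<in>A. n_pendants u * c u)"
  proof (rule sum.cong[OF refl])
    fix u assume "u \<in> A"
    then have "{x \<in> {v\<in>Lf. leaf_nbr v \<in> A}. leaf_nbr x = u} = {v \<in> Lf. leaf_nbr v = u}" by auto
    then show "(\<Sum>v\<in>{x \<in> {v\<in>Lf. leaf_nbr v \<in> A}. leaf_nbr x = u}. c (leaf_nbr v))
        = n_pendants u * c u"
      unfolding n_pendants_def by simp
  qed
  finally show ?thesis by simp
qed

lemma sum_n_pendants_internal: "(\<Sum>u\<in>I. n_pendants u) = card Lf"
proof -
  have "(\<Sum>u\<in>I. n_pendants u * 1) = (\<Sum>v\<in>{v\<in>Lf. leaf_nbr v \<in> I}. 1)"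
    by (rule sum_n_pendants_mult[OF finite_internal])
  moreover have "{v\<in>Lf. leaf_nbr v \<in> I} = Lf" using leaf_nbr_internal by auto
  ultimately show ?thesis by simp
qed

text \<open>Degree counting: each internal vertex has at least three neighbours, but the internal vertices
  span only \<open>2(k - 1)\<close> arcs among themselves.\<close>

lemma card_internal_add_two_le: "card I + 2 \<le> card Lf"
proof -
  have "(\<Sum>u\<in>I. 3) \<le> (\<Sum>u\<in>I. card (nbrs u))" using three_le_card_nbrs by (intro sum_mono) auto
  also have "\<dots> \<le> (\<Sum>u\<in>I. card (nbrs u \<inter> I) + n_pendants u)"
  proof (intro sum_mono)
    fix u
    have "nbrs u = (nbrs u \<inter> I) \<union> (nbrs u \<inter> Lf)" using nbrs_subset V_eq_internal_Un_leaves by auto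
    then show "card (nbrs u) \<le> card (nbrs u \<inter> I) + n_pendants u"
      using card_nbrs_Int_leaves by (metis card_Un_le)
  qed
  also have "\<dots> = card (E \<inter> I \<times> I) + card Lf"
    using card_E_Int_Times[OF finite_internal] sum_n_pendants_internal by (simp add: sum.distrib)
  also have "\<dots> = 2 * (card I - 1) + card Lf"
    using card_E_Int_connected[OF internal_subset internal_nonempty induces_connected_internal]
    by simp
  finally show ?thesis using one_le_card_internal by simp
qed

end

context series_reduced_tree
begin

lemma induces_connected_subtree_Int_internal:
  assumes "S \<in> subtrees G" shows "induces_connected G (S \<inter> I)"
proof -
  have "induces_connected G (S - Lf)"
    by (rule induces_connected_Diff_low_degree)
       (use finite_nbrs sym_E assms in \<open>auto simp: nbrs_def leaves_def mem_subtrees_iff\<close>)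
  moreover have "S - Lf = S \<inter> I"
    using assms V_eq_internal_Un_leaves internal_Int_leaves unfolding mem_subtrees_iff by auto
  ultimately show ?thesis by simp
qed

lemma leaf_nbr_mem_subtree:
  assumes "S \<in> subtrees G" "v \<in> S" "v \<in> Lf" "w \<in> S" "w \<noteq> v"
  shows "leaf_nbr v \<in> S"
  using subtree_has_nbr[OF assms(1,2,4) assms(5)[symmetric]] leaf_nbr_eq[OF assms(3)] by auto

lemma subtree_disjoint_internal:
  assumes "S \<in> subtrees G" "S \<inter> I = {}"
  shows "\<exists>v\<in>Lf. S = {v}"
proof -
  obtain x where x: "x \<in> S" using assms unfolding mem_subtrees_iff by auto
  then have xL: "x \<in> Lf" using assms V_eq_internal_Un_leaves unfolding mem_subtrees_iff by auto
  have "S = {x}"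
  proof (rule ccontr)
    assume "S \<noteq> {x}"
    then obtain y where "y \<in> S" "y \<noteq> x" using x by auto
    then have "leaf_nbr x \<in> S" using leaf_nbr_mem_subtree[OF assms(1) x xL] by auto
    then show False using leaf_nbr_internal[OF xL] assms(2) by auto
  qed
  then show ?thesis using xL by auto
qed

lemma card_subtrees_disjoint_internal_le: "card {S \<in> subtrees G. S \<inter> I = {}} \<le> card Lf"
proof -
  have "{S \<in> subtrees G. S \<inter> I = {}} \<subseteq> (\<lambda>v. {v}) ` Lf" using subtree_disjoint_internal by blast
  then have "card {S \<in> subtrees G. S \<inter> I = {}} \<le> card ((\<lambda>v. {v}) ` Lf)"
    by (rule card_mono[rotated]) (use finite_leaves in auto)
  also have "\<dots> \<le> card Lf" by (rule card_image_le[OF finite_leaves])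
  finally show ?thesis .
qed

text \<open>Adding a leaf to a subtree containing its neighbour but not the leaf itself is injective.\<close>

lemma n_containing_leaf_nbr_le:
  assumes v: "v \<in> Lf"
  shows "n_containing (leaf_nbr v) \<le> 2 * n_containing v"
proof -
  define u where "u = leaf_nbr v"
  define A where "A = {S \<in> subtrees G. u \<in> S \<and> v \<notin> S}"
  define B where "B = {S \<in> subtrees G. u \<in> S \<and> v \<in> S}"
  have uv: "(u, v) \<in> E" using leaf_nbr[OF v] E_commute u_def by auto
  have "{S \<in> subtrees G. u \<in> S} = A \<union> B" unfolding A_def B_def by auto
  then have "n_containing u = card A + card B"
    unfolding n_containing_def
    by (simp, intro card_Un_disjoint) (use finite_subtrees in \<open>auto simp: A_def B_def\<close>)
  moreover have "card A \<le> card B"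
  proof (rule card_inj_on_le[of "insert v"])
    show "inj_on (insert v) A" unfolding A_def inj_on_def by auto
    show "insert v ` A \<subseteq> B"
    proof
      fix T assume "T \<in> insert v ` A"
      then obtain S where S: "S \<in> A" "T = insert v S" by auto
      have "induces_connected G (S \<union> {v})"
        by (rule induces_connected_Un_pendants)
           (use S uv sym_E in \<open>auto simp: A_def mem_subtrees_iff\<close>)
      then show "T \<in> B" using S v leaves_subset unfolding A_def B_def mem_subtrees_iff by auto
    qed
    show "finite B" using finite_subtrees unfolding B_def by auto
  qed
  moreover have "card B \<le> n_containing v"
    unfolding n_containing_def B_def by (rule card_mono) (use finite_subtrees in auto)
  ultimately show ?thesis using u_def by simp
qed

text \<open>Removing a leaf from a subtree other than the leaf itself is injective.\<close>

lemma two_n_containing_leaf_le: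
  assumes v: "v \<in> Lf"
  shows "2 * n_containing v \<le> N + 1"
proof -
  define C where "C = {S \<in> subtrees G. v \<in> S \<and> S \<noteq> {v}}"
  have "{S \<in> subtrees G. v \<in> S} \<subseteq> insert {v} C" unfolding C_def by auto
  then have "n_containing v \<le> card (insert {v} C)"
    unfolding n_containing_def by (intro card_mono) (use finite_subtrees in \<open>auto simp: C_def\<close>)
  also have "\<dots> \<le> Suc (card C)"
    by (rule card_insert_le_m1) (use finite_subtrees in \<open>auto simp: C_def\<close>)
  finally have "n_containing v \<le> Suc (card C)" .
  moreover have "card C \<le> n_avoiding v" unfolding n_avoiding_def
  proof (rule card_inj_on_le[of "\<lambda>S. S - {v}"])
    show "inj_on (\<lambda>S. S - {v}) C" unfolding C_def inj_on_def by auto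
    show "(\<lambda>S. S - {v}) ` C \<subseteq> {S \<in> subtrees G. v \<notin> S}"
    proof
      fix T assume "T \<in> (\<lambda>S. S - {v}) ` C"
      then obtain S where S: "S \<in> C" "T = S - {v}" by auto
      have "induces_connected G (S - {v})"
        by (rule induces_connected_Diff_low_degree)
           (use finite_nbrs v sym_E S in \<open>auto simp: nbrs_def leaves_def C_def mem_subtrees_iff\<close>)
      moreover have "S - {v} \<noteq> {}" using S unfolding C_def by auto
      ultimately show "T \<in> {S \<in> subtrees G. v \<notin> S}" using S unfolding C_def mem_subtrees_iff by auto
    qed
    show "finite {S \<in> subtrees G. v \<notin> S}" using finite_subtrees by auto
  qed
  ultimately show ?thesis using n_containing_add_n_avoiding[of v] by simp
qed

lemma two_pow_card_leaves_le: "2 ^ card Lf \<le> N"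
proof -
  have "card (Pow Lf) \<le> N"
  proof (rule card_inj_on_le[of "\<lambda>A. I \<union> A"])
    show "inj_on (\<lambda>A. I \<union> A) (Pow Lf)" using internal_Int_leaves by (auto simp: inj_on_def)
    show "(\<lambda>A. I \<union> A) ` Pow Lf \<subseteq> subtrees G"
    proof
      fix T assume "T \<in> (\<lambda>A. I \<union> A) ` Pow Lf"
      then obtain A where A: "A \<subseteq> Lf" "T = I \<union> A" by auto
      have "induces_connected G (I \<union> A)"
      proof (rule induces_connected_Un_pendants[OF induces_connected_internal _ sym_E])
        fix q assume "q \<in> A"
        then show "\<exists>a\<in>I. (a, q) \<in> E" using A leaf_nbr leaf_nbr_internal E_commute by blast
      qed
      then show "T \<in> subtrees G"
        using A internal_nonempty internal_subset leaves_subset unfolding mem_subtrees_iff by auto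
    qed
  qed (rule finite_subtrees)
  then show ?thesis using finite_leaves by (simp add: card_Pow)
qed

lemma sum_card_subtrees_split:
  "(\<Sum>S\<in>subtrees G. card S) = (\<Sum>v\<in>I. n_containing v) + (\<Sum>v\<in>Lf. n_containing v)"
  using sum_card_subtrees V_eq_internal_Un_leaves internal_Int_leaves finite_internal finite_leaves
  by (simp add: sum.union_disjoint)

lemma avg_subtree_density_eq:
  "avg_subtree_density G = real (\<Sum>S\<in>subtrees G. card S) / (real N * real (card V))"
  unfolding avg_subtree_density_def mean_subtree_order_def by simp

lemma card_V_pos: "0 < real (card V)" using four_le_card_V by simp
lemma N_pos: "0 < real N"
proof -
  have "0 < (2::nat) ^ card Lf" by simp
  then show ?thesis using two_pow_card_leaves_le by linarith
qed

lemma avg_subtree_density_le: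
  "avg_subtree_density G \<le> 1/2 + 1/2 * (card I / card V) + 1 / card V"
proof -
  have "card Lf \<le> N" using two_pow_card_leaves_le by (meson less_exp order.trans less_imp_le)
  have "(\<Sum>v\<in>I. n_containing v) \<le> (\<Sum>v\<in>I. N)"
    using n_containing_add_n_avoiding by (intro sum_mono) (metis le_add1)
  moreover have "(\<Sum>v\<in>Lf. 2 * n_containing v) \<le> (\<Sum>v\<in>Lf. N + 1)"
    using two_n_containing_leaf_le by (intro sum_mono) auto
  ultimately have "2 * (\<Sum>S\<in>subtrees G. card S) \<le> 2 * card I * N + card Lf * (N + 1)"
    unfolding sum_card_subtrees_split by (simp add: sum_distrib_left[symmetric] algebra_simps)
  also have "\<dots> \<le> N * (card V + card I + 2)" using \<open>card Lf \<le> N\<close> card_V_eq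
    by (simp add: algebra_simps)
  finally have "2 * real (\<Sum>S\<in>subtrees G. card S) \<le> real N * (card V + card I + 2)"
    by (metis of_nat_le_iff of_nat_mult of_nat_numeral of_nat_add)
  then show ?thesis
    unfolding avg_subtree_density_eq using N_pos card_V_pos by (simp add: field_simps)
qed


lemma leaf_proportion_eq: "card Lf / card V = 1 - card I / card V"
  using card_V_eq card_V_pos by (simp add: field_simps)

end

context series_reduced_tree
begin

definition "branch a b = {u \<in> I - {a}. (b, u) \<in> (E \<inter> (I - {a}) \<times> (I - {a}))\<^sup>*}"
definition "branch_leaves a b = {v \<in> Lf. leaf_nbr v \<in> branch a b}"

lemma branch_subset: "branch a b \<subseteq> I - {a}" unfolding branch_def by auto

lemma finite_branch: "finite (branch a b)"
  using branch_subset finite_internal by (meson finite_Diff finite_subset)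

lemma card_branch_leaves: "card (branch_leaves a b) = (\<Sum>u\<in>branch a b. n_pendants u)"
  using sum_n_pendants_mult[OF finite_branch, of "\<lambda>_. 1" a b] unfolding branch_leaves_def by simp

lemma mem_branch: "b \<in> I \<Longrightarrow> (a, b) \<in> E \<Longrightarrow> b \<in> branch a b"
  using irrefl_E unfolding branch_def by auto

lemma one_le_card_branch: "b \<in> I \<Longrightarrow> (a, b) \<in> E \<Longrightarrow> 1 \<le> card (branch a b)"
  using mem_branch finite_branch by (metis One_nat_def Suc_leI card_gt_0_iff empty_iff)

lemma branch_closed:
  assumes "y \<in> branch a b" "(y, z) \<in> E" "z \<in> I" "z \<noteq> a"
  shows "z \<in> branch a b"
proof -
  have "(b, y) \<in> (E \<inter> (I - {a}) \<times> (I - {a}))\<^sup>*" "y \<in> I - {a}"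
    using assms(1) unfolding branch_def by auto
  moreover have "(y, z) \<in> E \<inter> (I - {a}) \<times> (I - {a})" using assms calculation(2) by auto
  ultimately show ?thesis
    using assms(3,4) unfolding branch_def by (auto intro: rtrancl_into_rtrancl)
qed

lemma induces_connected_branch:
  assumes "b \<in> I" "(a, b) \<in> E"
  shows "induces_connected G (branch a b)"
proof -
  let ?F = "E \<inter> (I - {a}) \<times> (I - {a})" and ?R = "branch a b"
  have path: "(b, u) \<in> (E \<inter> ?R \<times> ?R)\<^sup>*" if "(b, u) \<in> ?F\<^sup>*" for u
    using that
  proof (induction rule: rtrancl_induct)
    case (step y z)
    then have "y \<in> ?R" "z \<in> ?R" using mem_branch[OF assms] unfolding branch_def
      by (auto intro: rtrancl_into_rtrancl)
    then show ?case using step by (auto intro: rtrancl_into_rtrancl)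
  qed simp
  show ?thesis unfolding induces_connected_def
  proof (intro ballI)
    fix x y assume "x \<in> ?R" "y \<in> ?R"
    then have "(b, x) \<in> (E \<inter> ?R \<times> ?R)\<^sup>*" "(b, y) \<in> (E \<inter> ?R \<times> ?R)\<^sup>*"
      using path unfolding branch_def by auto
    then show "(x, y) \<in> (E \<inter> ?R \<times> ?R)\<^sup>*"
      using rtrancl_Int_Times_sym[OF sym_E] by (meson rtrancl_trans)
  qed
qed

lemma card_E_Int_branch:
  "b \<in> I \<Longrightarrow> (a, b) \<in> E \<Longrightarrow> card (E \<inter> branch a b \<times> branch a b) = 2 * (card (branch a b) - 1)"
  using branch_subset internal_subset mem_branch induces_connected_branch
  by (intro card_E_Int_connected) blast+

text \<open>The branch and the branch together with \<open>a\<close> both induce trees, so exactly one edge joins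
  them.\<close>

lemma card_arcs_branch_to_le_one:
  assumes a: "a \<in> I" and b: "b \<in> I" and ab: "(a, b) \<in> E"
  shows "card (E \<inter> branch a b \<times> {a}) \<le> 1"
proof -
  let ?R = "branch a b"
  have aR: "a \<notin> ?R" using branch_subset by auto
  have "induces_connected G (?R \<union> {a})"
    by (rule induces_connected_Un_edge[OF induces_connected_branch[OF b ab] _ mem_branch[OF b ab]])
       (use ab E_commute sym_E in \<open>auto simp: induces_connected_def\<close>)
  then have c1: "card (E \<inter> (?R \<union> {a}) \<times> (?R \<union> {a})) = 2 * card ?R"
    using card_E_Int_connected[of "?R \<union> {a}"] branch_subset internal_subset a aR finite_branch
    by auto
  have swap: "card (E \<inter> {a} \<times> ?R) = card (E \<inter> ?R \<times> {a})"
  proof -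
    have "E \<inter> {a} \<times> ?R = (\<lambda>(x, y). (y, x)) ` (E \<inter> ?R \<times> {a})" using E_commute by auto
    moreover have "inj_on (\<lambda>(x, y). (y, x)) (E \<inter> ?R \<times> {a})" by (auto simp: inj_on_def)
    ultimately show ?thesis by (simp add: card_image)
  qed
  have split: "E \<inter> (?R \<union> {a}) \<times> (?R \<union> {a}) = (E \<inter> ?R \<times> ?R) \<union> (E \<inter> ?R \<times> {a}) \<union> (E \<inter> {a} \<times> ?R)"
    using irrefl_E by auto
  have fin: "finite (E \<inter> X)" for X using finite_E by auto
  have "card ((E \<inter> ?R \<times> ?R) \<union> (E \<inter> ?R \<times> {a}) \<union> (E \<inter> {a} \<times> ?R))
      = card (E \<inter> ?R \<times> ?R) + card (E \<inter> ?R \<times> {a}) + card (E \<inter> {a} \<times> ?R)"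
    using aR fin by (subst card_Un_disjoint, auto)+
  then show ?thesis
    using c1 swap card_E_Int_branch[OF b ab] one_le_card_branch[OF b ab] unfolding split by simp
qed

lemma branch_nbr_eq:
  assumes a: "a \<in> I" and b: "b \<in> I" and ab: "(a, b) \<in> E"
    and u: "u \<in> branch a b" and ua: "(u, a) \<in> E"
  shows "u = b"
proof -
  have "(u, a) \<in> E \<inter> branch a b \<times> {a}" "(b, a) \<in> E \<inter> branch a b \<times> {a}"
    using u ua mem_branch[OF b ab] ab E_commute by auto
  moreover have "\<forall>p\<in>E \<inter> branch a b \<times> {a}. \<forall>q\<in>E \<inter> branch a b \<times> {a}. p = q"
    using card_arcs_branch_to_le_one[OF a b ab] finite_E
      card_le_Suc0_iff_eq[of "E \<inter> branch a b \<times> {a}"]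
    by auto
  ultimately have "(u, a) = (b, a)" by blast
  then show ?thesis by simp
qed

text \<open>Degree counting inside the branch, which spans \<open>2(|R| - 1)\<close> arcs and sends one arc to \<open>a\<close>.\<close>

lemma card_branch_less:
  assumes a: "a \<in> I" and b: "b \<in> I" and ab: "(a, b) \<in> E"
  shows "card (branch a b) + 1 \<le> card (branch_leaves a b)"
proof -
  let ?R = "branch a b"
  have "(\<Sum>u\<in>?R. 3) \<le> (\<Sum>u\<in>?R. card (nbrs u))"
    using three_le_card_nbrs branch_subset by (intro sum_mono) auto
  also have "\<dots> \<le> (\<Sum>u\<in>?R. card (nbrs u \<inter> ?R) + n_pendants u + card (nbrs u \<inter> {a}))"
  proof (intro sum_mono)
    fix u assume u: "u \<in> ?R"
    have "nbrs u \<subseteq> (nbrs u \<inter> ?R) \<union> (nbrs u \<inter> Lf) \<union> (nbrs u \<inter> {a})"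
      using branch_closed[OF u] nbrs_subset V_eq_internal_Un_leaves unfolding nbrs_def by blast
    then have "card (nbrs u) \<le> card ((nbrs u \<inter> ?R) \<union> (nbrs u \<inter> Lf) \<union> (nbrs u \<inter> {a}))"
      by (intro card_mono) (use finite_nbrs in auto)
    also have "\<dots> \<le> card (nbrs u \<inter> ?R) + card (nbrs u \<inter> Lf) + card (nbrs u \<inter> {a})"
      by (meson card_Un_le add_le_mono order_trans le_refl)
    finally show "card (nbrs u) \<le> card (nbrs u \<inter> ?R) + n_pendants u + card (nbrs u \<inter> {a})"
      using card_nbrs_Int_leaves by simp
  qed
  also have "\<dots> = card (E \<inter> ?R \<times> ?R) + card (branch_leaves a b) + card (E \<inter> ?R \<times> {a})"
    using card_E_Int_Times[OF finite_branch] card_branch_leaves by (simp add: sum.distrib)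
  finally have "3 * card ?R \<le> 2 * (card ?R - 1) + card (branch_leaves a b) + 1"
    using card_E_Int_branch[OF b ab] card_arcs_branch_to_le_one[OF a b ab] by simp
  then show ?thesis using one_le_card_branch[OF b ab] by linarith
qed

lemma internal_subset_branches:
  assumes a: "a \<in> I" and b: "b \<in> I" and ab: "(a, b) \<in> E"
  shows "I \<subseteq> branch a b \<union> branch b a"
proof
  fix u assume "u \<in> I"
  then have "(b, u) \<in> (E \<inter> I \<times> I)\<^sup>*"
    using induces_connected_internal b unfolding induces_connected_def by auto
  then show "u \<in> branch a b \<union> branch b a"
  proof (induction rule: rtrancl_induct)
    case base then show ?case using mem_branch[OF b ab] by auto
  next
    case (step y z)
    show ?case
    proof (cases "y \<in> branch a b")
      case True
      then show ?thesis using branch_closed[OF True] step mem_branch[OF a E_commute[OF ab]]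
        by (cases "z = a") auto
    next
      case False
      then have "y \<in> branch b a" using step by auto
      then show ?thesis using branch_closed[OF \<open>y \<in> branch b a\<close>] step mem_branch[OF b ab]
        by (cases "z = b") auto
    qed
  qed
qed

lemma card_leaves_le_branch_leaves:
  assumes "a \<in> I" "b \<in> I" "(a, b) \<in> E"
  shows "card Lf \<le> card (branch_leaves a b) + card (branch_leaves b a)"
proof -
  have "card Lf = (\<Sum>u\<in>I. n_pendants u)" using sum_n_pendants_internal by simp
  also have "\<dots> \<le> (\<Sum>u\<in>branch a b \<union> branch b a. n_pendants u)"
    by (rule sum_mono2) (use internal_subset_branches[OF assms] finite_branch in auto)
  also have "\<dots> \<le> card (branch_leaves a b) + card (branch_leaves b a)"
    unfolding card_branch_leaves
    using sum_Un_nat[OF finite_branch finite_branch, of n_pendants a b b a]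
    by linarith
  finally show ?thesis .
qed

lemma subtree_Int_branch_empty:
  assumes a: "a \<in> I" and b: "b \<in> I" and ab: "(a, b) \<in> E"
    and S: "S \<in> subtrees G" and "a \<in> S" "b \<notin> S"
  shows "S \<inter> branch a b = {}"
proof -
  \<comment> \<open>a path from \<open>a\<close> inside \<open>S\<close> could only enter the branch through the arc \<open>(a, b)\<close>\<close>
  have "z \<notin> branch a b" if "(a, z) \<in> (E \<inter> (S \<inter> I) \<times> (S \<inter> I))\<^sup>*" for z
    using that
  proof (induction rule: rtrancl_induct)
    case base then show ?case using branch_subset by auto
  next
    case (step y z)
    show ?case
    proof
      assume z: "z \<in> branch a b"
      show False
      proof (cases "y = a")
        case True
        then have "z = b" using branch_nbr_eq[OF a b ab z] step E_commute by auto
        then show False using step \<open>b \<notin> S\<close> by auto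
      next
        case False
        have "y \<in> branch a b" using branch_closed[OF z _ _ False] step E_commute by auto
        then show False using step by auto
      qed
    qed
  qed
  moreover have "(a, z) \<in> (E \<inter> (S \<inter> I) \<times> (S \<inter> I))\<^sup>*" if "z \<in> S \<inter> I" for z
    using induces_connected_subtree_Int_internal[OF S] that \<open>a \<in> S\<close> a
    unfolding induces_connected_def by auto
  ultimately show ?thesis using branch_subset[of a b] by blast
qed

lemma subtree_Int_branch_leaves_empty:
  assumes "a \<in> I" "b \<in> I" "(a, b) \<in> E" and S: "S \<in> subtrees G" "a \<in> S" "b \<notin> S"
  shows "S \<inter> branch_leaves a b = {}"
proof (rule ccontr)
  assume "S \<inter> branch_leaves a b \<noteq> {}"
  then obtain v where v: "v \<in> S" "v \<in> Lf" "leaf_nbr v \<in> branch a b" unfolding branch_leaves_def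
    by auto
  have "a \<noteq> v" using assms(1) v(2) internal_Int_leaves by auto
  then have "leaf_nbr v \<in> S" using leaf_nbr_mem_subtree[OF S(1) v(1,2) S(2)] by auto
  then show False using subtree_Int_branch_empty[OF assms] v(3) by auto
qed

lemma subtree_Un_branch_mem_subtrees:
  assumes "b \<in> I" "(a, b) \<in> E" "S \<in> subtrees G" "a \<in> S" "A \<subseteq> branch_leaves a b"
  shows "S \<union> branch a b \<union> A \<in> subtrees G"
proof -
  have "induces_connected G (S \<union> branch a b)"
    by (rule induces_connected_Un_edge[OF _ induces_connected_branch[OF assms(1,2)] _
          mem_branch[OF assms(1,2)] assms(2) sym_E])
       (use assms(3,4) in \<open>auto simp: mem_subtrees_iff\<close>)
  then have "induces_connected G (S \<union> branch a b \<union> A)"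
    by (rule induces_connected_Un_pendants[OF _ _ sym_E])
       (use assms(5) leaf_nbr E_commute in \<open>force simp: branch_leaves_def\<close>)
  moreover have "S \<union> branch a b \<union> A \<subseteq> V"
    using assms branch_subset[of a b] internal_subset leaves_subset
    unfolding branch_leaves_def mem_subtrees_iff by blast
  ultimately show ?thesis using assms(3) unfolding mem_subtrees_iff by auto
qed

definition "n_leaving a b = card {S \<in> subtrees G. a \<in> S \<and> b \<notin> S}"

text \<open>A subtree containing \<open>a\<close> but not \<open>b\<close> extends injectively by the branch beyond \<open>(a, b)\<close> and
  any set of its leaves to a subtree containing both.\<close>

lemma n_leaving_mult_le:
  assumes a: "a \<in> I" and b: "b \<in> I" and ab: "(a, b) \<in> E"
  shows "n_leaving a b * (1 + 2 ^ card (branch_leaves a b)) \<le> N"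
proof -
  define X where "X = {S \<in> subtrees G. a \<in> S \<and> b \<notin> S}"
  define Y where "Y = {S \<in> subtrees G. a \<in> S \<and> b \<in> S}"
  define F where "F p = fst p \<union> branch a b \<union> snd p" for p :: "nat set \<times> nat set"
  have "inj_on F (X \<times> Pow (branch_leaves a b))"
  proof (rule inj_onI)
    fix p q assume p: "p \<in> X \<times> Pow (branch_leaves a b)" and q: "q \<in> X \<times> Pow (branch_leaves a b)"
    have "branch a b \<inter> branch_leaves a b = {}"
      using branch_subset internal_Int_leaves unfolding branch_leaves_def by auto
    then have "fst r = F r - (branch a b \<union> branch_leaves a b)" "snd r = F r \<inter> branch_leaves a b"
      if r: "r \<in> X \<times> Pow (branch_leaves a b)" for r
    proof -
      have "fst r \<inter> branch a b = {}" "fst r \<inter> branch_leaves a b = {}" "snd r \<subseteq> branch_leaves a b"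
        using r subtree_Int_branch_empty[OF a b ab, of "fst r"]
          subtree_Int_branch_leaves_empty[OF a b ab, of "fst r"]
        unfolding X_def by auto
      then show "fst r = F r - (branch a b \<union> branch_leaves a b)" "snd r = F r \<inter> branch_leaves a b"
        using \<open>branch a b \<inter> branch_leaves a b = {}\<close> unfolding F_def by auto
    qed
    then show "F p = F q \<Longrightarrow> p = q" using p q by (metis prod_eqI)
  qed
  moreover have "F ` (X \<times> Pow (branch_leaves a b)) \<subseteq> Y"
    using subtree_Un_branch_mem_subtrees[OF b ab] mem_branch[OF b ab]
    unfolding F_def X_def Y_def by auto
  moreover have "finite Y" using finite_subtrees unfolding Y_def by auto
  moreover have "finite (branch_leaves a b)" using finite_leaves unfolding branch_leaves_def by auto
  ultimately have "card X * 2 ^ card (branch_leaves a b) \<le> card Y"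
    using card_inj_on_le by (fastforce simp: card_cartesian_product card_Pow)
  moreover have "card X + card Y \<le> N"
  proof -
    have "card (X \<union> Y) = card X + card Y"
      by (rule card_Un_disjoint) (use finite_subtrees in \<open>auto simp: X_def Y_def\<close>)
    moreover have "card (X \<union> Y) \<le> N"
      by (rule card_mono[OF finite_subtrees]) (auto simp: X_def Y_def)
    ultimately show ?thesis by simp
  qed
  ultimately show ?thesis unfolding n_leaving_def X_def[symmetric] by (simp add: algebra_simps)
qed

lemma ex_arc_leaving_to_branch:
  assumes S: "S \<in> subtrees G" and s: "s \<in> S \<inter> I" and u: "u \<in> I - S"
  shows "\<exists>a b. (a, b) \<in> E \<and> a \<in> S \<inter> I \<and> b \<in> I - S \<and> u \<in> branch a b"
proof -
  have "(s, u) \<in> (E \<inter> I \<times> I)\<^sup>*"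
    using induces_connected_internal s u unfolding induces_connected_def by auto
  then have "u \<in> S \<or> (\<exists>a b. (a, b) \<in> E \<and> a \<in> S \<inter> I \<and> b \<in> I - S \<and> u \<in> branch a b)"
  proof (induction rule: rtrancl_induct)
    case base then show ?case using s by auto
  next
    case (step y z)
    show ?case
    proof (cases "y \<in> S")
      case True
      then show ?thesis using step mem_branch by (cases "z \<in> S") blast+
    next
      case False
      then obtain a b where ab: "(a, b) \<in> E" "a \<in> S \<inter> I" "b \<in> I - S" "y \<in> branch a b"
        using step by auto
      then show ?thesis using branch_closed[OF ab(4)] step by (cases "z = a") blast+
    qed
  qed
  then show ?thesis using u by auto
qed

end

definition density_error :: "real \<Rightarrow> real" where
  "density_error x = 2 * x / 2 powr (x / 4)"

lemma density_error_nonneg: "0 \<le> x \<Longrightarrow> 0 \<le> density_error x"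
  unfolding density_error_def by simp

lemma fifteen_mult_le_two_pow: "2 \<le> x \<Longrightarrow> 15 * x \<le> 14 + 4 * (2::nat) ^ x"
proof (induction x rule: nat_induct_at_least)
  case (Suc m)
  have "(2::nat) ^ 2 \<le> 2 ^ m" by (rule power_increasing) (use Suc(1) in auto)
  then show ?case using Suc by simp
qed simp

context series_reduced_tree
begin

abbreviation "eps \<equiv> density_error (card V)"

definition "weight u = 2 + n_pendants u"
definition "missing_weight S = (\<Sum>u\<in>I - S. weight u)"
definition "branch_weight a b = (\<Sum>u\<in>branch a b. weight u)"
definition "internal_arcs = E \<inter> I \<times> I"
definition "leaving_arcs S = {p \<in> internal_arcs. fst p \<in> S \<and> snd p \<notin> S}"
definition "leaving_ratio a b = real (branch_weight a b) / (1 + 2 ^ card (branch_leaves a b))"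

lemma finite_internal_arcs: "finite internal_arcs"
  using finite_E unfolding internal_arcs_def by auto

lemma card_internal_arcs: "card internal_arcs = 2 * (card I - 1)"
  unfolding internal_arcs_def
  by (rule card_E_Int_connected[OF internal_subset internal_nonempty induces_connected_internal])

lemma sum_weight_internal: "(\<Sum>u\<in>I. weight u) = 2 * card I + card Lf"
  unfolding weight_def sum.distrib sum_n_pendants_internal by simp

lemma sum_weight_n_containing_le: "(\<Sum>u\<in>I. weight u * n_containing u) \<le> 2 * (\<Sum>S\<in>subtrees G. card S)"
proof -
  have "{v \<in> Lf. leaf_nbr v \<in> I} = Lf" using leaf_nbr_internal by auto
  then have "(\<Sum>u\<in>I. n_pendants u * n_containing u) = (\<Sum>v\<in>Lf. n_containing (leaf_nbr v))"
    using sum_n_pendants_mult[OF finite_internal, of n_containing] by simp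
  also have "\<dots> \<le> (\<Sum>v\<in>Lf. 2 * n_containing v)"
    using n_containing_leaf_nbr_le by (intro sum_mono) auto
  finally have "(\<Sum>u\<in>I. n_pendants u * n_containing u) \<le> 2 * (\<Sum>v\<in>Lf. n_containing v)"
    by (simp add: sum_distrib_left)
  moreover have "(\<Sum>u\<in>I. weight u * n_containing u)
      = 2 * (\<Sum>u\<in>I. n_containing u) + (\<Sum>u\<in>I. n_pendants u * n_containing u)"
    unfolding weight_def distrib_right sum.distrib sum_distrib_left ..
  ultimately show ?thesis unfolding sum_card_subtrees_split by simp
qed

lemma sum_weight_n_avoiding: "(\<Sum>u\<in>I. weight u * n_avoiding u) = (\<Sum>S\<in>subtrees G. missing_weight S)"
  using sum_mult_card_swap[OF finite_internal finite_subtrees, of weight "\<lambda>u S. u \<notin> S"]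
  unfolding n_avoiding_def missing_weight_def by (simp add: set_diff_eq)

text \<open>Every internal vertex missed by \<open>S\<close> lies in the branch beyond some arc leaving \<open>S\<close>.\<close>

lemma missing_weight_le_leaving:
  assumes S: "S \<in> subtrees G" and SI: "S \<inter> I \<noteq> {}"
  shows "missing_weight S \<le> (\<Sum>p\<in>leaving_arcs S. branch_weight (fst p) (snd p))"
proof -
  let ?w = "\<lambda>p u. if u \<in> branch (fst p) (snd p) then weight u else 0"
  have fin: "finite (leaving_arcs S)" using finite_internal_arcs unfolding leaving_arcs_def by auto
  obtain s where s: "s \<in> S \<inter> I" using SI by auto
  have "missing_weight S \<le> (\<Sum>u\<in>I - S. \<Sum>p\<in>leaving_arcs S. ?w p u)"
    unfolding missing_weight_def
  proof (rule sum_mono)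
    fix u assume u: "u \<in> I - S"
    obtain a b where ab: "(a, b) \<in> E" "a \<in> S \<inter> I" "b \<in> I - S" "u \<in> branch a b"
      using ex_arc_leaving_to_branch[OF S s u] by blast
    then have "(a, b) \<in> leaving_arcs S" unfolding leaving_arcs_def internal_arcs_def by auto
    then have "?w (a, b) u \<le> (\<Sum>p\<in>leaving_arcs S. ?w p u)" by (rule member_le_sum) (use fin in auto)
    then show "weight u \<le> (\<Sum>p\<in>leaving_arcs S. ?w p u)" using ab by simp
  qed
  also have "\<dots> = (\<Sum>p\<in>leaving_arcs S. \<Sum>u\<in>I - S. ?w p u)" by (rule sum.swap)
  also have "\<dots> \<le> (\<Sum>p\<in>leaving_arcs S. branch_weight (fst p) (snd p))"
  proof (rule sum_mono)
    fix p
    have "(\<Sum>u\<in>I - S. ?w p u) = (\<Sum>u\<in>(I - S) \<inter> branch (fst p) (snd p). weight u)"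
      by (rule sum.inter_restrict[symmetric]) (use finite_internal in auto)
    also have "\<dots> \<le> branch_weight (fst p) (snd p)"
      unfolding branch_weight_def by (rule sum_mono2) (use finite_branch in auto)
    finally show "(\<Sum>u\<in>I - S. ?w p u) \<le> branch_weight (fst p) (snd p)" .
  qed
  finally show ?thesis .
qed

lemma missing_weight_le: "missing_weight S \<le> 2 * card I + card Lf"
  unfolding missing_weight_def sum_weight_internal[symmetric]
  by (rule sum_mono2) (use finite_internal in auto)

lemma sum_missing_weight_le:
  "(\<Sum>S\<in>subtrees G. missing_weight S) \<le> card Lf * (2 * card I + card Lf)
     + (\<Sum>p\<in>internal_arcs. branch_weight (fst p) (snd p) * n_leaving (fst p) (snd p))"
proof -
  let ?K = "2 * card I + card Lf"
  let ?h = "\<lambda>S. \<Sum>p\<in>leaving_arcs S. branch_weight (fst p) (snd p)"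
  let ?D = "{S. S \<inter> I = {}}"
  have "(\<Sum>S\<in>subtrees G. missing_weight S) \<le> (\<Sum>S\<in>subtrees G. if S \<inter> I = {} then ?K else ?h S)"
    using missing_weight_le missing_weight_le_leaving by (intro sum_mono) auto
  also have "\<dots> = (\<Sum>S\<in>subtrees G \<inter> ?D. ?K) + (\<Sum>S\<in>subtrees G \<inter> - ?D. ?h S)"
    by (rule sum.If_cases[OF finite_subtrees])
  also have "\<dots> \<le> card Lf * ?K + (\<Sum>S\<in>subtrees G. ?h S)"
  proof (rule add_mono)
    have "subtrees G \<inter> ?D = {S \<in> subtrees G. S \<inter> I = {}}" by blast
    then show "(\<Sum>S\<in>subtrees G \<inter> ?D. ?K) \<le> card Lf * ?K"
      using card_subtrees_disjoint_internal_le by simp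
    show "(\<Sum>S\<in>subtrees G \<inter> - ?D. ?h S) \<le> (\<Sum>S\<in>subtrees G. ?h S)"
      by (rule sum_mono2[OF finite_subtrees]) auto
  qed
  also have "(\<Sum>S\<in>subtrees G. ?h S)
      = (\<Sum>p\<in>internal_arcs. branch_weight (fst p) (snd p) * n_leaving (fst p) (snd p))"
    using sum_mult_card_swap[OF finite_internal_arcs finite_subtrees,
        of "\<lambda>p. branch_weight (fst p) (snd p)" "\<lambda>p S. fst p \<in> S \<and> snd p \<notin> S"]
    unfolding leaving_arcs_def n_leaving_def by simp
  finally show ?thesis by simp
qed

lemma branch_weight_eq: "branch_weight a b = 2 * card (branch a b) + card (branch_leaves a b)"
  unfolding branch_weight_def weight_def card_branch_leaves sum.distrib by simp

lemma branch_weight_le: "branch_weight a b \<le> 2 * card I + card Lf"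
  unfolding branch_weight_def sum_weight_internal[symmetric]
  by (rule sum_mono2) (use finite_internal branch_subset in auto)

lemma card_V_le_two_card_leaves: "card V \<le> 2 * card Lf"
  using card_internal_add_two_le card_V_eq by simp

lemma two_powr_le_N: "2 powr (card V / 4) \<le> N"
proof -
  have "2 powr (card V / 4) \<le> 2 powr card Lf"
    using card_V_le_two_card_leaves by (intro powr_mono) auto
  also have "\<dots> = 2 ^ card Lf" by (simp add: powr_realpow)
  also have "\<dots> \<le> N" using two_pow_card_leaves_le
    by (metis of_nat_le_iff of_nat_numeral of_nat_power)
  finally show ?thesis .
qed

text \<open>A branch has more leaves than internal vertices, so its weight is small against
  \<open>2\<^sup>\<lambda>\<close>; this is where the degree bound \<open>3\<close> enters the lower estimate.\<close>

lemma leaving_ratio_le: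
  assumes a: "a \<in> I" and b: "b \<in> I" and ab: "(a, b) \<in> E"
  shows "leaving_ratio a b \<le> 4/5"
proof -
  let ?l = "card (branch_leaves a b)"
  have L: "card (branch a b) + 1 \<le> ?l" by (rule card_branch_less[OF a b ab])
  then have "2 \<le> ?l" using one_le_card_branch[OF b ab] by simp
  have "5 * branch_weight a b \<le> 15 * ?l - 10" using branch_weight_eq L by simp
  also have "\<dots> \<le> 4 + 4 * 2 ^ ?l" using fifteen_mult_le_two_pow[OF \<open>2 \<le> ?l\<close>] by simp
  finally have "real (5 * branch_weight a b) \<le> real (4 + 4 * 2 ^ ?l)" by (simp only: of_nat_le_iff)
  then have "5 * real (branch_weight a b) \<le> 4 * (1 + 2 ^ ?l)" by simp
  then show ?thesis unfolding leaving_ratio_def by (simp add: divide_le_eq field_simps)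
qed

lemma leaving_ratio_le_density_error:
  assumes "card Lf \<le> 2 * card (branch_leaves a b)"
  shows "leaving_ratio a b \<le> eps"
proof -
  have "branch_weight a b \<le> 2 * card V" using branch_weight_le[of a b] card_V_eq by linarith
  then have "real (branch_weight a b) \<le> 2 * card V"
    by (metis of_nat_le_iff of_nat_mult of_nat_numeral)
  moreover have "2 powr (card V / 4) \<le> 2 powr card (branch_leaves a b)"
    using assms card_V_le_two_card_leaves by (intro powr_mono) auto
  then have "2 powr (card V / 4) \<le> 1 + 2 ^ card (branch_leaves a b)" by (simp add: powr_realpow)
  ultimately show ?thesis unfolding leaving_ratio_def density_error_def by (intro frac_le) auto
qed

text \<open>One of the two branches of an internal edge carries at least half of the leaves.\<close>

lemma leaving_ratio_add_le:
  assumes "p \<in> internal_arcs"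
  shows "leaving_ratio (fst p) (snd p) + leaving_ratio (snd p) (fst p) \<le> 4/5 + eps"
proof -
  obtain a b where ab: "p = (a, b)" "a \<in> I" "b \<in> I" "(a, b) \<in> E"
    using assms unfolding internal_arcs_def by auto
  have "card Lf \<le> card (branch_leaves a b) + card (branch_leaves b a)"
    by (rule card_leaves_le_branch_leaves[OF ab(2-4)])
  then consider "card Lf \<le> 2 * card (branch_leaves a b)" | "card Lf \<le> 2 * card (branch_leaves b a)"
    by linarith
  then show ?thesis
    using leaving_ratio_le_density_error leaving_ratio_le[OF ab(2-4)]
      leaving_ratio_le[OF ab(3,2) E_commute[OF ab(4)]] ab(1)
    by cases fastforce+
qed

lemma sum_leaving_ratio_le:
  "(\<Sum>p\<in>internal_arcs. leaving_ratio (fst p) (snd p)) \<le> (card I - 1) * (4/5 + eps)"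
proof -
  let ?h = "\<lambda>p. leaving_ratio (fst p) (snd p)"
  have swap: "(snd p, fst p) \<in> internal_arcs" if "p \<in> internal_arcs" for p
    using that E_commute unfolding internal_arcs_def by (cases p) auto
  then have "(\<lambda>p. (snd p, fst p)) ` internal_arcs = internal_arcs"
    by (auto intro!: image_eqI[where x = "(b, a)" for a b])
  then have "bij_betw (\<lambda>p. (snd p, fst p)) internal_arcs internal_arcs"
    unfolding bij_betw_def by (auto simp: inj_on_def prod_eq_iff)
  then have "(\<Sum>p\<in>internal_arcs. ?h (snd p, fst p)) = (\<Sum>p\<in>internal_arcs. ?h p)"
    by (rule sum.reindex_bij_betw)
  then have "2 * (\<Sum>p\<in>internal_arcs. ?h p) = (\<Sum>p\<in>internal_arcs. ?h p + ?h (snd p, fst p))"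
    by (simp add: sum.distrib)
  also have "\<dots> \<le> (\<Sum>p\<in>internal_arcs. 4/5 + eps)" using leaving_ratio_add_le by (intro sum_mono) auto
  also have "\<dots> = 2 * ((card I - 1) * (4/5 + eps))"
    using card_internal_arcs one_le_card_internal by (simp add: of_nat_diff)
  finally show ?thesis by linarith
qed

lemma branch_weight_mult_n_leaving_le:
  assumes "p \<in> internal_arcs"
  shows "real (branch_weight (fst p) (snd p) * n_leaving (fst p) (snd p))
    \<le> N * leaving_ratio (fst p) (snd p)"
proof -
  obtain a b where ab: "p = (a, b)" "a \<in> I" "b \<in> I" "(a, b) \<in> E"
    using assms unfolding internal_arcs_def by auto
  have "real (n_leaving a b * (1 + 2 ^ card (branch_leaves a b))) \<le> N"
    using n_leaving_mult_le[OF ab(2-4)] by (simp only: of_nat_le_iff)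
  then have "real (n_leaving a b) * (1 + 2 ^ card (branch_leaves a b)) \<le> N"
    by (simp add: distrib_left)
  then have "real (n_leaving a b) \<le> N / (1 + 2 ^ card (branch_leaves a b))"
    by (simp add: pos_le_divide_eq add_pos_nonneg)
  then have "real (branch_weight a b) * real (n_leaving a b)
      \<le> real (branch_weight a b) * (N / (1 + 2 ^ card (branch_leaves a b)))"
    by (intro mult_left_mono) auto
  then show ?thesis unfolding ab(1) leaving_ratio_def by (simp add: mult.commute)
qed

lemma sum_missing_weight_le_real:
  "(\<Sum>S\<in>subtrees G. missing_weight S) \<le> N * card V * eps + N * ((card I - 1) * (4/5 + eps))"
proof -
  have "card Lf * (2 * card I + card Lf) \<le> N * card V * eps"
  proof -
    have "card Lf * (2 * card I + card Lf) \<le> card Lf * (2 * card V)" using card_V_eq by simp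
    then have "real (card Lf * (2 * card I + card Lf)) \<le> real (card Lf * (2 * card V))"
      by (simp only: of_nat_le_iff)
    also have "\<dots> = real (card Lf) * (2 * real (card V))" by simp
    also have "\<dots> \<le> real (card V) * N / 2 powr (card V / 4) * (2 * real (card V))"
    proof (rule mult_right_mono)
      have "real (card Lf) * 2 powr (card V / 4) \<le> real (card V) * N"
        using two_powr_le_N card_V_eq by (intro mult_mono) auto
      then show "real (card Lf) \<le> real (card V) * N / 2 powr (card V / 4)"
        by (simp add: le_divide_eq)
    qed simp
    also have "\<dots> = N * card V * eps" unfolding density_error_def by simp
    finally show ?thesis .
  qed
  moreover have "(\<Sum>p\<in>internal_arcs. branch_weight (fst p) (snd p) * n_leaving (fst p) (snd p))
      \<le> N * ((card I - 1) * (4/5 + eps))"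
  proof -
    have "real (\<Sum>p\<in>internal_arcs. branch_weight (fst p) (snd p) * n_leaving (fst p) (snd p))
        \<le> (\<Sum>p\<in>internal_arcs. N * leaving_ratio (fst p) (snd p))"
      unfolding of_nat_sum by (intro sum_mono branch_weight_mult_n_leaving_le)
    also have "\<dots> \<le> N * ((card I - 1) * (4/5 + eps))"
      unfolding sum_distrib_left[symmetric] using sum_leaving_ratio_le
      by (intro mult_left_mono) auto
    finally show ?thesis .
  qed
  ultimately show ?thesis using sum_missing_weight_le by (smt (verit) of_nat_add of_nat_le_iff)
qed

lemma two_sum_card_subtrees_ge:
  "N * (card V + card I / 5 - 2 * card V * eps) \<le> 2 * (\<Sum>S\<in>subtrees G. card S)"
proof -
  have "(\<Sum>u\<in>I. weight u * n_containing u) + (\<Sum>u\<in>I. weight u * n_avoiding u) = (\<Sum>u\<in>I. weight u * N)"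
    unfolding sum.distrib[symmetric] distrib_left[symmetric] n_containing_add_n_avoiding ..
  also have "\<dots> = N * (2 * card I + card Lf)"
    unfolding sum_distrib_right[symmetric] sum_weight_internal by simp
  finally have main:
    "N * (2 * card I + card Lf) - N * card V * eps - N * ((card I - 1) * (4/5 + eps))
      \<le> 2 * (\<Sum>S\<in>subtrees G. card S)"
    using sum_weight_n_containing_le sum_missing_weight_le_real sum_weight_n_avoiding
    by (smt (verit) of_nat_add of_nat_le_iff of_nat_mult)
  have "real (card I - 1) * eps \<le> card V * eps"
    using card_V_eq by (intro mult_right_mono density_error_nonneg) auto
  moreover have "real (card I - 1) * (4/5 + eps) = 4/5 * card I - 4/5 + real (card I - 1) * eps"
    using one_le_card_internal by (simp add: of_nat_diff field_simps)
  moreover have "2 * card V * eps = 2 * (card V * eps)" by simp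
  moreover have "real (2 * card I + card Lf) = 2 * card I + card Lf" by simp
  moreover have "real (card V) = card I + card Lf" using card_V_eq by simp
  ultimately have "card V + card I / 5 - 2 * card V * eps
      \<le> real (2 * card I + card Lf) - card V * eps - (card I - 1) * (4/5 + eps)"
    by linarith
  then have "N * (card V + card I / 5 - 2 * card V * eps)
      \<le> N * (real (2 * card I + card Lf) - card V * eps - (card I - 1) * (4/5 + eps))"
    by (rule mult_left_mono) simp
  then show ?thesis using main by (simp add: algebra_simps)
qed

lemma avg_subtree_density_ge: "1/2 + 1/10 * (card I / card V) - eps \<le> avg_subtree_density G"
proof -
  have "1/2 + 1/10 * (card I / card V) - eps
      = N * (card V + card I / 5 - 2 * card V * eps) / (N * (2 * card V))"
    using N_pos card_V_pos by (simp add: field_simps)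
  also have "\<dots> \<le> 2 * real (\<Sum>S\<in>subtrees G. card S) / (N * (2 * card V))"
    using two_sum_card_subtrees_ge N_pos card_V_pos by (intro divide_right_mono) auto
  also have "\<dots> = avg_subtree_density G"
    unfolding avg_subtree_density_eq using N_pos card_V_pos by (simp add: field_simps)
  finally show ?thesis .
qed

end

lemma graph_iso_if_relabellings_eq:
  assumes f: "bij_betw f (verts G) A" and h: "bij_betw h (verts H) A"
    and "is_graph G" "is_graph H"
    and eq: "map_prod f f ` edges G = map_prod h h ` edges H"
  shows "graph_iso G H"
proof -
  have EG: "edges G \<subseteq> verts G \<times> verts G" and EH: "edges H \<subseteq> verts H \<times> verts H"
    using assms(3,4) unfolding is_graph_def by auto
  define g where "g = inv_into (verts H) h \<circ> f"
  have g: "bij_betw g (verts G) (verts H)"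
    unfolding g_def by (rule bij_betw_trans[OF f bij_betw_inv_into[OF h]])
  have hg: "h (g x) = f x" if "x \<in> verts G" for x
  proof -
    have "f x \<in> h ` verts H" using that f h by (auto simp: bij_betw_def)
    then show ?thesis unfolding g_def by (simp add: f_inv_into_f)
  qed
  have "(x, y) \<in> edges G \<longleftrightarrow> (g x, g y) \<in> edges H" if "x \<in> verts G" "y \<in> verts G" for x y
  proof -
    have gxy: "g x \<in> verts H" "g y \<in> verts H" using g that by (auto dest: bij_betw_apply)
    have "(x, y) \<in> edges G \<longleftrightarrow> map_prod f f (x, y) \<in> map_prod f f ` edges G"
      using f that EG
      by (intro inj_on_image_mem_iff[symmetric]) (auto simp: bij_betw_def intro: map_prod_inj_on)
    also have "\<dots> \<longleftrightarrow> map_prod h h (g x, g y) \<in> map_prod h h ` edges H" using eq hg that by simp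
    also have "\<dots> \<longleftrightarrow> (g x, g y) \<in> edges H"
      using h gxy EH
      by (intro inj_on_image_mem_iff) (auto simp: bij_betw_def intro: map_prod_inj_on)
    finally show ?thesis .
  qed
  then show ?thesis unfolding graph_iso_def using g by blast
qed

text \<open>By pigeonhole: relabelled onto \<open>{0..<m}\<close>, infinitely many graphs of order \<open>m\<close> would give
  two with the same edge set.\<close>

lemma finite_card_verts_eq:
  fixes T :: "nat \<Rightarrow> graph"
  assumes graph: "\<And>i. is_graph (T i)"
    and non_iso: "\<And>i j. i \<noteq> j \<Longrightarrow> \<not> graph_iso (T i) (T j)"
  shows "finite {i. card (verts (T i)) = m}"
proof (rule ccontr)
  define J where "J = {i. card (verts (T i)) = m}"
  assume "infinite {i. card (verts (T i)) = m}"
  then have "infinite J" unfolding J_def .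
  have "\<forall>i. \<exists>h. bij_betw h (verts (T i)) {0..<card (verts (T i))}"
    using graph by (simp add: ex_bij_betw_finite_nat is_graph_def)
  then obtain h where h: "\<And>i. bij_betw (h i) (verts (T i)) {0..<card (verts (T i))}"
    by (auto dest!: choice)
  define C where "C i = map_prod (h i) (h i) ` edges (T i)" for i
  have "C i \<in> Pow ({0..<m} \<times> {0..<m})" if "i \<in> J" for i
  proof -
    have "edges (T i) \<subseteq> verts (T i) \<times> verts (T i)" using graph[of i] unfolding is_graph_def by simp
    then show ?thesis using that h[of i] unfolding C_def J_def bij_betw_def by auto
  qed
  then have "finite (C ` J)"
    by (meson finite_Pow_iff finite_SigmaI finite_atLeastLessThan finite_subset image_subsetI)
  then have "\<not> inj_on C J" using \<open>infinite J\<close> finite_imageD by blast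
  then obtain i j where ij: "i \<in> J" "j \<in> J" "i \<noteq> j" "C i = C j" unfolding inj_on_def by blast
  have "graph_iso (T i) (T j)"
  proof (rule graph_iso_if_relabellings_eq[OF h[of i] _ graph graph])
    show "bij_betw (h j) (verts (T j)) {0..<card (verts (T i))}"
      using h[of j] ij(1,2) unfolding J_def by simp
    show "map_prod (h i) (h i) ` edges (T i) = map_prod (h j) (h j) ` edges (T j)"
      using ij(4) unfolding C_def .
  qed
  then show False using non_iso ij(3) by blast
qed

lemma card_verts_tendsto_at_top:
  fixes T :: "nat \<Rightarrow> graph"
  assumes "\<And>i. is_graph (T i)" and "\<And>i j. i \<noteq> j \<Longrightarrow> \<not> graph_iso (T i) (T j)"
  shows "filterlim (\<lambda>i. card (verts (T i))) at_top sequentially"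
  unfolding filterlim_at_top
proof
  fix m
  have "{i. \<not> m \<le> card (verts (T i))} = (\<Union>l<m. {i. card (verts (T i)) = l})" by auto
  then have "finite {i. \<not> m \<le> card (verts (T i))}" using finite_card_verts_eq[OF assms] by simp
  then show "\<forall>\<^sub>F i in sequentially. m \<le> card (verts (T i))"
    by (simp add: cofinite_eq_sequentially[symmetric] eventually_cofinite)
qed

lemma density_error_tendsto_0: "(\<lambda>m. density_error (real m)) \<longlonglongrightarrow> 0"
proof -
  have "density_error (real m) = 2 * (real m / (2 powr (1/4)) ^ m)" for m
    unfolding density_error_def by (simp add: powr_realpow[symmetric] powr_powr)
  moreover have "(\<lambda>m. 2 * (real m / (2 powr (1/4)) ^ m)) \<longlonglongrightarrow> 2 * 0"
    by (intro tendsto_mult tendsto_const lim_n_over_pown) simp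
  ultimately show ?thesis by simp
qed

lemma tendsto_iff_tendsto_0_if_bounds:
  fixes D r e :: "'a \<Rightarrow> real"
  assumes "c > 0" and nonneg: "\<And>x. 0 \<le> r x"
    and lower: "\<And>x. l + c * r x - e x \<le> D x" and upper: "\<And>x. D x \<le> l + C * r x + e x"
    and e: "(e \<longlongrightarrow> 0) F"
  shows "(D \<longlongrightarrow> l) F \<longleftrightarrow> (r \<longlongrightarrow> 0) F"
proof
  assume "(D \<longlongrightarrow> l) F"
  then have "((\<lambda>x. (D x - l + e x) / c) \<longlongrightarrow> (l - l + 0) / c) F"
    using \<open>c > 0\<close> by (intro tendsto_intros e) auto
  moreover have "r x \<le> (D x - l + e x) / c" for x
    using lower[of x] \<open>c > 0\<close> by (simp add: field_simps)
  ultimately show "(r \<longlongrightarrow> 0) F"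
    using nonneg by (intro tendsto_sandwich[of "\<lambda>_. 0" r F "\<lambda>x. (D x - l + e x) / c"]) auto
next
  assume "(r \<longlongrightarrow> 0) F"
  then have "((\<lambda>x. l + C * r x + e x) \<longlongrightarrow> l + C * 0 + 0) F" by (intro tendsto_intros e)
  moreover have "((\<lambda>x. l - e x) \<longlongrightarrow> l - 0) F" by (intro tendsto_intros e)
  moreover have "l - e x \<le> D x" for x
    using lower[of x] mult_nonneg_nonneg[OF less_imp_le[OF \<open>c > 0\<close>] nonneg[of x]] by linarith
  ultimately show "(D \<longlongrightarrow> l) F"
    using upper by (intro tendsto_sandwich[of "\<lambda>x. l - e x" D F "\<lambda>x. l + C * r x + e x"]) auto
qed
theorem mainTheorem1:
  fixes T :: "nat \<Rightarrow> graph"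
  assumes "\<And>i. T3 (T i)"
    and "\<And>i j. i \<noteq> j \<Longrightarrow> \<not> graph_iso (T i) (T j)"
  shows "(\<lambda>i. avg_subtree_density (T i)) \<longlonglongrightarrow> 1/2 \<longleftrightarrow>
         (\<lambda>i. real (card (leaves (T i))) / real (card (verts (T i)))) \<longlonglongrightarrow> 1"
proof -
  have T: "series_reduced_tree (T i)" for i using assms(1) by (rule series_reduced_tree_if_T3)
  define n where "n i = real (card (verts (T i)))" for i
  define r where "r i = real (card (internal_verts (T i))) / n i" for i
  define e where "e i = density_error (n i) + 1 / n i" for i
  have "filterlim (\<lambda>i. card (verts (T i))) at_top sequentially"
    using T assms(2)
    by (intro card_verts_tendsto_at_top) (simp add: tree.is_graph series_reduced_tree_def)
  then have e: "e \<longlonglongrightarrow> 0 + 0" unfolding e_def n_def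
    by (intro tendsto_add filterlim_compose[OF density_error_tendsto_0]
        filterlim_compose[OF lim_inverse_n'])
  have "0 \<le> r i" "0 \<le> 1 / n i" "0 \<le> density_error (n i)" for i
    unfolding r_def n_def by (simp_all add: density_error_nonneg)
  moreover have lower: "1/2 + 1/10 * r i - e i \<le> avg_subtree_density (T i)" for i
    using series_reduced_tree.avg_subtree_density_ge[OF T, of i] \<open>0 \<le> 1 / n i\<close>
    unfolding r_def e_def n_def by linarith
  moreover have upper: "avg_subtree_density (T i) \<le> 1/2 + 1/2 * r i + e i" for i
    using series_reduced_tree.avg_subtree_density_le[OF T, of i] \<open>0 \<le> density_error (n i)\<close>
    unfolding r_def e_def n_def by linarith
  ultimately have "(\<lambda>i. avg_subtree_density (T i)) \<longlonglongrightarrow> 1/2 \<longleftrightarrow> r \<longlonglongrightarrow> 0"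
    using e by (intro tendsto_iff_tendsto_0_if_bounds[where c = "1/10" and C = "1/2"]) simp_all
  also have "\<dots> \<longleftrightarrow> (\<lambda>i. 1 - r i) \<longlonglongrightarrow> 1"
    using tendsto_add_const_iff[of 1 "\<lambda>i. - r i" 0] tendsto_minus_cancel_left[of r 0] by simp
  also have "(\<lambda>i. 1 - r i) = (\<lambda>i. real (card (leaves (T i))) / real (card (verts (T i))))"
    using series_reduced_tree.leaf_proportion_eq[OF T] unfolding r_def n_def by simp
  finally show ?thesis .
qed

end
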